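(* Let $H_1,H_2$ be complex Hilbert spaces and let $T$ be a densely defined closed operator from $H_1$ to $H_2$. Then for each $\epsilon>0$ there exists $S\in\mathcal B(H_1,H_2)$ with $\|S\|\leq\epsilon$ such that $S+T$ (with domain $D(T)$) is minimum attaining and $\theta(S+T,T)\leq\epsilon$. Moreover, if $m(T)>0$, then $S$ can be chosen to be a rank one operator.
   Context: Hilbert spaces are complex and infinite dimensional. For a densely defined closed operator $A$ with domain $D(A)$, the minimum modulus is $m(A)=\inf\{\|Ax\|: x\in D(A),\ \|x\|=1\}$, and $A$ is called minimum attaining if there exists $x_0\in D(A)$ with $\|x_0\|=1$ and $\|Ax_0\|=m(A)$. The graph of $A$ is $G(A)=\{(Ax,x):x\in D(A)\}$; the gap between densely defined closed operators $A,B$ is $\theta(A,B)=\|P_{G(A)}-P_{G(B)}\|$, where $P_M$ is the orthogonal projection onto the closed subspace $M$. *)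

theory Defs
  imports "HOL-Analysis.Analysis"
begin

text \<open>Complex Hilbert spaces: a real inner product space that is complete and carries a
  complex scalar multiplication compatible with the real one and with the norm.
  (By polarization this is exactly a complex Hilbert space; the real inner product is
  the real part of the complex one.)\<close>

class complex_hilbert = real_inner + complete_space +
  fixes scaleC :: "complex \<Rightarrow> 'a \<Rightarrow> 'a" (infixr \<open>*\<^sub>C\<close> 75)
  assumes scaleC_add_right: "scaleC a (x + y) = scaleC a x + scaleC a y"
    and scaleC_add_left: "scaleC (a + b) x = scaleC a x + scaleC b x"
    and scaleC_scaleC: "scaleC a (scaleC b x) = scaleC (a * b) x"
    and scaleC_one: "scaleC 1 x = x"
    and scaleR_scaleC: "scaleR r x = scaleC (complex_of_real r) x"
    and norm_scaleC: "norm (scaleC a x) = cmod a * norm x"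

definition infinite_dimensional :: "'a::complex_hilbert itself \<Rightarrow> bool" where
  "infinite_dimensional _ \<longleftrightarrow> \<not> (\<exists>B::'a set. finite B \<and> span B = UNIV)"

definition csubspace :: "'a::complex_hilbert set \<Rightarrow> bool" where
  "csubspace S \<longleftrightarrow> 0 \<in> S \<and> (\<forall>x\<in>S. \<forall>y\<in>S. x + y \<in> S) \<and> (\<forall>c. \<forall>x\<in>S. c *\<^sub>C x \<in> S)"

definition graph :: "('a::complex_hilbert \<Rightarrow> 'b::complex_hilbert) \<Rightarrow> 'a set \<Rightarrow> ('b \<times> 'a) set" where
  "graph T D = {(T x, x) | x. x \<in> D}"

definition densely_defined_closed :: "('a::complex_hilbert \<Rightarrow> 'b::complex_hilbert) \<Rightarrow> 'a set \<Rightarrow> bool" where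
  "densely_defined_closed T D \<longleftrightarrow>
     csubspace D \<and> closure D = UNIV \<and>
     (\<forall>x\<in>D. \<forall>y\<in>D. T (x + y) = T x + T y) \<and>
     (\<forall>c. \<forall>x\<in>D. T (c *\<^sub>C x) = c *\<^sub>C T x) \<and>
     closed (graph T D)"

definition bounded_clinear_op :: "('a::complex_hilbert \<Rightarrow> 'b::complex_hilbert) \<Rightarrow> bool" where
  "bounded_clinear_op S \<longleftrightarrow>
     (\<forall>x y. S (x + y) = S x + S y) \<and> (\<forall>c x. S (c *\<^sub>C x) = c *\<^sub>C S x) \<and>
     (\<exists>K. \<forall>x. norm (S x) \<le> norm x * K)"

definition rank_one :: "('a::complex_hilbert \<Rightarrow> 'b::complex_hilbert) \<Rightarrow> bool" where
  "rank_one S \<longleftrightarrow> (\<exists>u. u \<noteq> 0 \<and> range S = {c *\<^sub>C u | c. True})"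

definition min_modulus :: "('a::complex_hilbert \<Rightarrow> 'b::complex_hilbert) \<Rightarrow> 'a set \<Rightarrow> real" where
  "min_modulus T D = Inf {norm (T x) | x. x \<in> D \<and> norm x = 1}"

definition min_attaining :: "('a::complex_hilbert \<Rightarrow> 'b::complex_hilbert) \<Rightarrow> 'a set \<Rightarrow> bool" where
  "min_attaining T D \<longleftrightarrow> (\<exists>x0\<in>D. norm x0 = 1 \<and> norm (T x0) = min_modulus T D)"

definition orth_proj :: "'a::real_inner set \<Rightarrow> 'a \<Rightarrow> 'a" where
  "orth_proj M x = (THE y. y \<in> M \<and> (\<forall>z\<in>M. inner (x - y) z = 0))"

definition gap :: "('a::complex_hilbert \<Rightarrow> 'b::complex_hilbert) \<Rightarrow> 'a set \<Rightarrow> ('a \<Rightarrow> 'b) \<Rightarrow> 'a set \<Rightarrow> real" where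
  "gap A DA B DB = onorm (\<lambda>p. orth_proj (graph A DA) p - orth_proj (graph B DB) p)"

end

theory Submission
  imports Defs
begin

text \<open>
  If m(T) = 0, choose a unit vector p in D with ||T p|| \<le> \<epsilon>; the rank-one operator
  S x = -<p, x> T p annihilates p, so S + T attains the minimum modulus 0.

  If m(T) > 0, T maps closed subspaces of its domain onto closed subspaces, so T p has a
  component r orthogonal to the image N of the vectors of D orthogonal to p, and
  ||r|| \<ge> m(T). For a unit p with ||T p|| close to m(T) and a multiple w of r with ||w|| \<le> m(T)
  and ||w - T p|| \<le> \<epsilon>, put S x = <p, x> (w - T p). Writing x = \<alpha> p + y with y orthogonal to p
  gives (S + T) x = \<alpha> w + T y with orthogonal summands, hence
  ||(S + T) x|| \<ge> ||w|| ||x|| = ||(S + T) p|| ||x||.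

  In both cases ||S|| \<le> \<epsilon>, and every point of either graph is within relative distance ||S||
  of the other graph, which bounds the gap by ||S||.
\<close>

section \<open>The complex structure\<close>

lemma norm_add_square:
  "(norm (a + b))\<^sup>2 = (norm a)\<^sup>2 + (norm b)\<^sup>2 + 2 * inner a (b::'c::real_inner)"
  by (simp add: power2_norm_eq_inner inner_add_left inner_add_right inner_commute)

lemma norm_diff_square:
  "(norm (a - b))\<^sup>2 = (norm a)\<^sup>2 + (norm b)\<^sup>2 - 2 * inner a (b::'c::real_inner)"
  by (simp add: power2_norm_eq_inner inner_diff_left inner_diff_right inner_commute)

lemma scaleC_of_real: "complex_of_real r *\<^sub>C x = r *\<^sub>R (x::'a::complex_hilbert)"
  by (simp add: scaleR_scaleC)

lemma scaleC_zero_left [simp]: "0 *\<^sub>C (x::'a::complex_hilbert) = 0"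
  by (metis of_real_0 scaleC_of_real scaleR_zero_left)

lemma scaleC_diff_right: "c *\<^sub>C (x - y) = c *\<^sub>C x - c *\<^sub>C (y::'a::complex_hilbert)"
  by (metis add_diff_cancel diff_add_cancel scaleC_add_right)

lemma scaleC_minus_left [simp]: "(- c) *\<^sub>C x = - (c *\<^sub>C (x::'a::complex_hilbert))"
  by (metis add_eq_0_iff2 neg_eq_iff_add_eq_0 scaleC_add_left scaleC_zero_left)

lemma scaleC_Re_Im: "c *\<^sub>C (x::'a::complex_hilbert) = Re c *\<^sub>R x + Im c *\<^sub>R (\<i> *\<^sub>C x)"
proof -
  have "c = complex_of_real (Re c) + complex_of_real (Im c) * \<i>"
    by (simp add: complex_eq_iff)
  then have "c *\<^sub>C x = complex_of_real (Re c) *\<^sub>C x + complex_of_real (Im c) *\<^sub>C (\<i> *\<^sub>C x)"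
    by (metis scaleC_add_left scaleC_scaleC)
  then show ?thesis by (simp add: scaleC_of_real)
qed

lemma scaleC_ii_ii [simp]: "\<i> *\<^sub>C \<i> *\<^sub>C (x::'a::complex_hilbert) = - x"
  by (metis scaleC_scaleC scaleC_of_real complex_i_mult_minus mult_1_right of_real_1 of_real_minus
      scaleR_minus1_left)

lemma inner_scaleC_ii_ii [simp]: "inner (\<i> *\<^sub>C x) (\<i> *\<^sub>C y) = inner x (y::'a::complex_hilbert)"
proof -
  have "(norm (\<i> *\<^sub>C x + \<i> *\<^sub>C y))\<^sup>2 = (norm (x + y))\<^sup>2"
    by (simp add: norm_scaleC flip: scaleC_add_right)
  then show ?thesis
    unfolding norm_add_square by (simp add: norm_scaleC)
qed

lemma inner_scaleC_ii_left: "inner (\<i> *\<^sub>C x) y = - inner x (\<i> *\<^sub>C (y::'a::complex_hilbert))"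
  using inner_scaleC_ii_ii[of x "\<i> *\<^sub>C y"] by simp

lemma inner_scaleC_left: "inner (c *\<^sub>C x) y = inner x (cnj c *\<^sub>C (y::'a::complex_hilbert))"
  by (simp add: scaleC_Re_Im[of c] scaleC_Re_Im[of "cnj c"] inner_add_left inner_add_right
      inner_scaleC_ii_left inner_diff_right)

lemma inner_scaleC_ii_self [simp]: "inner x (\<i> *\<^sub>C (x::'a::complex_hilbert)) = 0"
  using inner_scaleC_ii_left[of x x] by (simp add: inner_commute)

text \<open>The complex inner product, antilinear in its first and linear in its second argument.\<close>

definition cinner :: "'a::complex_hilbert \<Rightarrow> 'a \<Rightarrow> complex" where
  "cinner p x = Complex (inner p x) (inner (\<i> *\<^sub>C p) x)"

lemma Re_cinner [simp]: "Re (cinner p x) = inner p x"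
  by (simp add: cinner_def)

lemma cinner_add_right: "cinner p (x + y) = cinner p x + cinner p y"
  by (simp add: cinner_def inner_add_right complex_eq_iff)

lemma cinner_scaleC_right: "cinner p (c *\<^sub>C x) = c * cinner p x"
  using inner_commute[of p "\<i> *\<^sub>C x"] inner_scaleC_ii_left[of x p] inner_commute[of x p]
  by (simp add: cinner_def complex_eq_iff inner_commute[of _ "c *\<^sub>C x"] inner_scaleC_left
      scaleC_Re_Im[of "cnj c"] inner_scaleC_ii_left algebra_simps)

lemma cinner_diff_right: "cinner p (x - y) = cinner p x - cinner p y"
  by (metis cinner_add_right diff_add_cancel eq_diff_eq)

lemma inner_scaleC_eq_cinner: "inner (c *\<^sub>C p) x = Re (cnj c * cinner p x)"
  by (simp add: scaleC_Re_Im[of c] cinner_def inner_add_left)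

lemma cinner_unit_self: "norm p = 1 \<Longrightarrow> cinner p p = 1"
  by (simp add: cinner_def complex_eq_iff inner_commute[of "\<i> *\<^sub>C p"] flip: power2_norm_eq_inner)

lemma norm_cinner_le:
  assumes "norm p = 1"
  shows "cmod (cinner p x) \<le> norm x"
proof -
  have "(cmod (cinner p x))\<^sup>2 = inner (cinner p x *\<^sub>C p) x"
    unfolding cmod_power2 by (simp add: inner_scaleC_eq_cinner power2_eq_square)
  also have "\<dots> \<le> cmod (cinner p x) * norm x"
    using Cauchy_Schwarz_ineq2[of "cinner p x *\<^sub>C p" x] by (simp add: norm_scaleC assms)
  finally show ?thesis
    by (cases "cinner p x = 0") (auto simp: power2_eq_square)
qed

definition butterfly :: "'b::complex_hilbert \<Rightarrow> 'a::complex_hilbert \<Rightarrow> 'a \<Rightarrow> 'b" where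
  "butterfly v p x = cinner p x *\<^sub>C v"

lemma butterfly_add: "butterfly v p (x + y) = butterfly v p x + butterfly v p y"
  by (simp add: butterfly_def cinner_add_right scaleC_add_left)

lemma butterfly_scaleC: "butterfly v p (c *\<^sub>C x) = c *\<^sub>C butterfly v p x"
  by (simp add: butterfly_def cinner_scaleC_right scaleC_scaleC)

lemma butterfly_apply_self: "norm p = 1 \<Longrightarrow> butterfly v p p = v"
  by (simp add: butterfly_def cinner_unit_self scaleC_one)

lemma norm_butterfly_le: "norm p = 1 \<Longrightarrow> norm (butterfly v p x) \<le> norm x * norm v"
  by (simp add: butterfly_def norm_scaleC mult_right_mono norm_cinner_le)

lemma bounded_clinear_op_butterfly: "norm p = 1 \<Longrightarrow> bounded_clinear_op (butterfly v p)"
  unfolding bounded_clinear_op_def using butterfly_add butterfly_scaleC norm_butterfly_le by blast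

lemma onorm_butterfly_le: "norm p = 1 \<Longrightarrow> onorm (butterfly v p) \<le> norm v"
  by (rule onorm_bound) (simp_all add: norm_butterfly_le mult.commute)

lemma rank_one_butterfly:
  assumes "norm p = 1" and "v \<noteq> 0"
  shows "rank_one (butterfly v p)"
  unfolding rank_one_def
proof (intro exI conjI)
  have "c *\<^sub>C v = butterfly v p (c *\<^sub>C p)" for c
    by (simp add: butterfly_scaleC butterfly_apply_self assms(1))
  then show "range (butterfly v p) = {c *\<^sub>C v |c. True}"
    by (auto simp: butterfly_def)
qed (fact assms(2))

section \<open>Orthogonal projections onto closed real subspaces\<close>

lemma Cauchy_of_dist_le:
  fixes y :: "nat \<Rightarrow> 'c::metric_space"
  assumes "\<And>m n. dist (y m) (y n) \<le> e m + e n" and "e \<longlonglongrightarrow> 0"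
  shows "Cauchy y"
proof (rule metric_CauchyI)
  fix \<epsilon> :: real
  assume "\<epsilon> > 0"
  then obtain N where N: "\<And>n. n \<ge> N \<Longrightarrow> \<bar>e n\<bar> < \<epsilon> / 2"
    using LIMSEQ_D[OF assms(2), of "\<epsilon> / 2"] by auto
  have "dist (y m) (y n) < \<epsilon>" if "m \<ge> N" "n \<ge> N" for m n
    using assms(1)[of m n] N[OF that(1)] N[OF that(2)] by linarith
  then show "\<exists>N. \<forall>m\<ge>N. \<forall>n\<ge>N. dist (y m) (y n) < \<epsilon>"
    by blast
qed

lemma nearest_point_orthogonal:
  fixes M :: "'c::real_inner set"
  assumes "subspace M" and "y \<in> M" and nearest: "\<And>z. z \<in> M \<Longrightarrow> norm (x - y) \<le> norm (x - z)"
    and "z \<in> M"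
  shows "inner (x - y) z = 0"
proof (cases "z = 0")
  case False
  define a where "a = inner (x - y) z"
  define t where "t = a / (norm z)\<^sup>2"
  have "y + t *\<^sub>R z \<in> M"
    using assms(1,2,4) by (simp add: subspace_add subspace_scale)
  then have "(norm (x - y))\<^sup>2 \<le> (norm ((x - y) - t *\<^sub>R z))\<^sup>2"
    using nearest by (simp add: power_mono diff_diff_eq)
  also have "\<dots> = (norm (x - y))\<^sup>2 + t\<^sup>2 * (norm z)\<^sup>2 - 2 * t * a"
    unfolding norm_diff_square by (simp add: a_def power_mult_distrib)
  also have "\<dots> = (norm (x - y))\<^sup>2 - a\<^sup>2 / (norm z)\<^sup>2"
    using False by (simp add: t_def power2_eq_square field_simps)
  finally have "a\<^sup>2 / (norm z)\<^sup>2 \<le> 0" by simp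
  with False show ?thesis
    by (simp add: a_def divide_le_0_iff)
qed simp

lemma parallelogram_law:
  "(norm (a + b))\<^sup>2 + (norm (a - b))\<^sup>2 = 2 * (norm a)\<^sup>2 + 2 * (norm (b::'c::real_inner))\<^sup>2"
  by (simp add: norm_add_square norm_diff_square)

lemma dist_square_le_of_near_minimal:
  fixes M :: "'c::real_inner set"
  assumes "subspace M" and "y \<in> M" and "y' \<in> M" and "\<And>z. z \<in> M \<Longrightarrow> d \<le> (norm (x - z))\<^sup>2"
  shows "(dist y y')\<^sup>2 \<le> 2 * ((norm (x - y))\<^sup>2 - d) + 2 * ((norm (x - y'))\<^sup>2 - d)"
proof -
  have "(1/2) *\<^sub>R (y + y') \<in> M"
    using assms(1-3) by (simp add: subspace_add subspace_scale)
  moreover have "(x - y) + (x - y') = 2 *\<^sub>R (x - (1/2) *\<^sub>R (y + y'))"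
    by (simp add: algebra_simps scaleR_2)
  ultimately have "4 * d \<le> (norm ((x - y) + (x - y')))\<^sup>2"
    using assms(4) by (simp add: power_mult_distrib)
  then show ?thesis
    using parallelogram_law[of "x - y" "x - y'"] by (simp add: dist_norm norm_minus_commute)
qed

lemma orthogonal_decomposition_exists:
  fixes M :: "'c::{real_inner,complete_space} set"
  assumes M: "subspace M" "closed M"
  shows "\<exists>y\<in>M. \<forall>z\<in>M. inner (x - y) z = 0"
proof -
  define d where "d = Inf ((\<lambda>y. (norm (x - y))\<^sup>2) ` M)"
  have d_le: "d \<le> (norm (x - z))\<^sup>2" if "z \<in> M" for z
    unfolding d_def by (rule cInf_lower) (use that in \<open>auto intro: bdd_belowI[of _ 0]\<close>)
  have "\<exists>y\<in>M. (norm (x - y))\<^sup>2 < d + inverse (Suc n)" for n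
    using cInf_lessD[of "(\<lambda>y. (norm (x - y))\<^sup>2) ` M" "d + inverse (Suc n)"] subspace_0[OF M(1)]
    by (auto simp: d_def[symmetric])
  then obtain y where yM: "\<And>n. y n \<in> M" and y_near: "\<And>n. (norm (x - y n))\<^sup>2 < d + inverse (Suc n)"
    by metis
  have dist_sq: "(dist (y m) (y n))\<^sup>2 \<le> 2 * inverse (Suc m) + 2 * inverse (Suc n)" for m n
  proof -
    have "(dist (y m) (y n))\<^sup>2 \<le> 2 * ((norm (x - y m))\<^sup>2 - d) + 2 * ((norm (x - y n))\<^sup>2 - d)"
      by (intro dist_square_le_of_near_minimal[OF M(1) yM yM] d_le)
    then show ?thesis
      using y_near[of m] y_near[of n] by argo
  qed
  have "dist (y m) (y n) \<le> sqrt (2 * inverse (Suc m)) + sqrt (2 * inverse (Suc n))" for m n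
  proof -
    have "dist (y m) (y n) \<le> sqrt (2 * inverse (Suc m) + 2 * inverse (Suc n))"
      using dist_sq by (rule real_le_rsqrt)
    also have "\<dots> \<le> sqrt (2 * inverse (Suc m)) + sqrt (2 * inverse (Suc n))"
      by (rule sqrt_add_le_add_sqrt) simp_all
    finally show ?thesis .
  qed
  moreover have "(\<lambda>n. sqrt (2 * inverse (real (Suc n)))) \<longlonglongrightarrow> 0"
    using tendsto_real_sqrt[OF tendsto_mult_right_zero[OF LIMSEQ_inverse_real_of_nat, of 2]] by simp
  ultimately have "Cauchy y"
    by (rule Cauchy_of_dist_le)
  then obtain L where L: "y \<longlonglongrightarrow> L"
    using Cauchy_convergent_iff convergent_def by blast
  have "L \<in> M"
    using M(2) L yM by (auto simp: closed_sequential_limits)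
  moreover have "(norm (x - L))\<^sup>2 \<le> d"
  proof (rule LIMSEQ_le)
    show "(\<lambda>n. (norm (x - y n))\<^sup>2) \<longlonglongrightarrow> (norm (x - L))\<^sup>2"
      by (intro tendsto_intros L)
    show "(\<lambda>n. d + inverse (real (Suc n))) \<longlonglongrightarrow> d"
      using tendsto_add[OF tendsto_const LIMSEQ_inverse_real_of_nat, of d] by simp
  qed (use y_near less_imp_le in blast)
  then have "norm (x - L) \<le> norm (x - z)" if "z \<in> M" for z
    using d_le[OF that] by (simp add: power2_le_imp_le)
  ultimately show ?thesis
    using nearest_point_orthogonal[OF M(1)] by blast
qed

lemma orth_proj_eqI:
  assumes "subspace M" and "y \<in> M" and "\<And>z. z \<in> M \<Longrightarrow> inner (x - y) z = 0"
  shows "orth_proj M x = y"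
  unfolding orth_proj_def
proof (rule the_equality)
  fix y'
  assume y': "y' \<in> M \<and> (\<forall>z\<in>M. inner (x - y') z = 0)"
  then have "y' - y \<in> M"
    using assms(1,2) by (simp add: subspace_diff)
  then have "inner (y' - y) (y' - y) = inner (x - y) (y' - y) - inner (x - y') (y' - y)"
    by (simp add: inner_diff_left)
  also have "\<dots> = 0"
    using assms(3) y' \<open>y' - y \<in> M\<close> by simp
  finally show "y' = y" by simp
qed (use assms in blast)

lemma
  fixes M :: "'c::{real_inner,complete_space} set"
  assumes "subspace M" and "closed M"
  shows orth_proj_in: "orth_proj M x \<in> M"
    and orth_proj_orthogonal: "z \<in> M \<Longrightarrow> inner (x - orth_proj M x) z = 0"
  using orthogonal_decomposition_exists[OF assms, of x] orth_proj_eqI[OF assms(1)] by auto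

lemma orth_proj_diff:
  fixes M :: "'c::{real_inner,complete_space} set"
  assumes "subspace M" and "closed M"
  shows "orth_proj M (a - b) = orth_proj M a - orth_proj M b"
proof (rule orth_proj_eqI[OF assms(1)])
  show "orth_proj M a - orth_proj M b \<in> M"
    using assms by (simp add: subspace_diff orth_proj_in)
  fix z
  assume "z \<in> M"
  have "a - b - (orth_proj M a - orth_proj M b) = (a - orth_proj M a) - (b - orth_proj M b)"
    by simp
  then show "inner (a - b - (orth_proj M a - orth_proj M b)) z = 0"
    using orth_proj_orthogonal[OF assms \<open>z \<in> M\<close>] by (simp only: inner_diff_left)
qed

lemma norm_diff_orth_proj_le:
  fixes M :: "'c::{real_inner,complete_space} set"
  assumes "subspace M" and "closed M" and "g \<in> M"
  shows "norm (w - orth_proj M w) \<le> norm (w - g)"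
proof -
  have "inner (w - orth_proj M w) (orth_proj M w - g) = 0"
    using assms by (simp add: orth_proj_orthogonal orth_proj_in subspace_diff)
  then have "(norm (w - g))\<^sup>2 = (norm (w - orth_proj M w))\<^sup>2 + (norm (orth_proj M w - g))\<^sup>2"
    using norm_add_square[of "w - orth_proj M w" "orth_proj M w - g"] by simp
  then show ?thesis
    by (simp add: power2_le_imp_le)
qed

lemma norm_orth_proj_le_of_orthogonal:
  fixes G1 G2 :: "'c::{real_inner,complete_space} set"
  assumes G1: "subspace G1" "closed G1" and G2: "subspace G2" "closed G2" and "e \<ge> 0"
    and near: "\<And>w. w \<in> G1 \<Longrightarrow> norm (w - orth_proj G2 w) \<le> e * norm w"
    and orth: "\<And>g. g \<in> G2 \<Longrightarrow> inner z g = 0"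
  shows "norm (orth_proj G1 z) \<le> e * norm z"
proof -
  define w where "w = orth_proj G1 z"
  have "w \<in> G1"
    unfolding w_def using G1 by (rule orth_proj_in)
  have "(norm w)\<^sup>2 = inner z w"
    using orth_proj_orthogonal[OF G1 \<open>w \<in> G1\<close>, of z]
    by (simp add: w_def inner_diff_left power2_norm_eq_inner)
  also have "\<dots> = inner z (w - orth_proj G2 w)"
    using orth[OF orth_proj_in[OF G2]] by (simp add: inner_diff_right)
  also have "\<dots> \<le> norm z * (e * norm w)"
    using Cauchy_Schwarz_ineq2[of z "w - orth_proj G2 w"] near[OF \<open>w \<in> G1\<close>]
    by (smt (verit) mult_left_mono norm_ge_zero)
  finally have "norm w * norm w \<le> (e * norm z) * norm w"
    by (simp add: power2_eq_square algebra_simps)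
  then show ?thesis
    unfolding w_def[symmetric] by (cases "norm w = 0") (auto simp: \<open>e \<ge> 0\<close>)
qed

lemma onorm_orth_proj_diff_le:
  fixes G1 G2 :: "'c::{real_inner,complete_space} set"
  assumes G1: "subspace G1" "closed G1" and G2: "subspace G2" "closed G2" and e: "e \<ge> 0"
    and near12: "\<And>w. w \<in> G1 \<Longrightarrow> \<exists>g\<in>G2. norm (w - g) \<le> e * norm w"
    and near21: "\<And>w. w \<in> G2 \<Longrightarrow> \<exists>g\<in>G1. norm (w - g) \<le> e * norm w"
  shows "onorm (\<lambda>z. orth_proj G1 z - orth_proj G2 z) \<le> e"
proof (rule onorm_bound[OF e])
  fix z
  have near12': "norm (w - orth_proj G2 w) \<le> e * norm w" if "w \<in> G1" for w
    using near12[OF that] norm_diff_orth_proj_le[OF G2] by (meson order_trans)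
  have near21': "norm (w - orth_proj G1 w) \<le> e * norm w" if "w \<in> G2" for w
    using near21[OF that] norm_diff_orth_proj_le[OF G1] by (meson order_trans)
  define z1 z2 where "z1 = z - orth_proj G2 z" and "z2 = orth_proj G2 z"
  define f where "f = z2 - orth_proj G1 z2"
  have z1_orth: "inner z1 g = 0" if "g \<in> G2" for g
    unfolding z1_def using G2 that by (rule orth_proj_orthogonal)
  have decomp: "orth_proj G1 z - orth_proj G2 z = orth_proj G1 z1 - f"
    unfolding z1_def z2_def f_def orth_proj_diff[OF G1] by simp
  have "inner (orth_proj G1 z1) f = 0"
    unfolding f_def using orth_proj_orthogonal[OF G1 orth_proj_in[OF G1]]
    by (simp add: inner_commute)
  then have "(norm (orth_proj G1 z - orth_proj G2 z))\<^sup>2 = (norm (orth_proj G1 z1))\<^sup>2 + (norm f)\<^sup>2"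
    unfolding decomp by (simp add: norm_diff_square)
  also have "\<dots> \<le> (e * norm z1)\<^sup>2 + (e * norm z2)\<^sup>2"
  proof (intro add_mono power_mono)
    show "norm (orth_proj G1 z1) \<le> e * norm z1"
      using norm_orth_proj_le_of_orthogonal[OF G1 G2 e near12' z1_orth] .
    show "norm f \<le> e * norm z2"
      unfolding f_def z2_def using near21'[OF orth_proj_in[OF G2]] .
  qed simp_all
  also have "\<dots> = (e * norm z)\<^sup>2"
    using norm_add_square[of z1 z2] z1_orth[OF orth_proj_in[OF G2]]
    by (simp add: z1_def z2_def power_mult_distrib distrib_left)
  finally show "norm (orth_proj G1 z - orth_proj G2 z) \<le> e * norm z"
    using e by (rule power2_le_imp_le[OF _ mult_nonneg_nonneg[OF _ norm_ge_zero]])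
qed

section \<open>Closed operators\<close>

lemma nonzero_if_infinite_dimensional:
  assumes "infinite_dimensional TYPE('a::complex_hilbert)"
  shows "\<exists>x::'a. x \<noteq> 0"
  using assms unfolding infinite_dimensional_def
  by (metis (full_types) finite.emptyI span_empty UNIV_eq_I singletonI)

lemma Cauchy_of_dist_le_mult:
  fixes y :: "nat \<Rightarrow> 'c::metric_space" and s :: "nat \<Rightarrow> 'd::metric_space"
  assumes "Cauchy s" and "K > 0" and "\<And>m n. dist (y m) (y n) \<le> K * dist (s m) (s n)"
  shows "Cauchy y"
proof (rule metric_CauchyI)
  fix \<epsilon> :: real
  assume "\<epsilon> > 0"
  with assms(2) have "\<epsilon> / K > 0" by simp
  then obtain N where "\<forall>m\<ge>N. \<forall>n\<ge>N. dist (s m) (s n) < \<epsilon> / K"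
    using metric_CauchyD[OF assms(1)] by blast
  then have "dist (y m) (y n) < \<epsilon>" if "m \<ge> N" "n \<ge> N" for m n
    using assms(2) assms(3)[of m n] that by (smt (verit) mult.commute pos_less_divide_eq)
  then show "\<exists>N. \<forall>m\<ge>N. \<forall>n\<ge>N. dist (y m) (y n) < \<epsilon>"
    by blast
qed

lemma bounded_linear_if_bounded_clinear_op:
  assumes "bounded_clinear_op S"
  shows "bounded_linear S"
proof -
  obtain K where "\<And>x y. S (x + y) = S x + S y" "\<And>c x. S (c *\<^sub>C x) = c *\<^sub>C S x"
    "\<And>x. norm (S x) \<le> norm x * K"
    using assms unfolding bounded_clinear_op_def by blast
  then show ?thesis
    by (intro bounded_linear_intro[of S K]) (simp_all add: scaleR_scaleC)
qed

lemma min_modulus_le: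
  "x \<in> D \<Longrightarrow> norm x = 1 \<Longrightarrow> min_modulus A D \<le> norm (A x)"
  unfolding min_modulus_def by (rule cInf_lower) (auto intro: bdd_belowI[of _ 0])

lemma min_attainingI:
  assumes "x0 \<in> D" and "norm x0 = 1" and "\<And>x. x \<in> D \<Longrightarrow> norm x = 1 \<Longrightarrow> norm (A x0) \<le> norm (A x)"
  shows "min_attaining A D"
proof -
  have "min_modulus A D = norm (A x0)"
    unfolding min_modulus_def by (rule cInf_eq_minimum) (use assms in auto)
  then show ?thesis
    unfolding min_attaining_def using assms(1,2) by auto
qed

locale closed_operator =
  fixes T :: "'a::complex_hilbert \<Rightarrow> 'b::complex_hilbert" and D :: "'a set"
  assumes densely_defined_closed: "densely_defined_closed T D"
begin

lemma domain_scaleC: "x \<in> D \<Longrightarrow> c *\<^sub>C x \<in> D"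
  using densely_defined_closed by (simp add: densely_defined_closed_def csubspace_def)

lemma domain_subspace: "subspace D"
  using densely_defined_closed
  by (auto simp: densely_defined_closed_def csubspace_def subspace_def scaleR_scaleC)

lemma domain_dense: "closure D = UNIV"
  using densely_defined_closed by (simp add: densely_defined_closed_def)

lemma add: "x \<in> D \<Longrightarrow> y \<in> D \<Longrightarrow> T (x + y) = T x + T y"
  using densely_defined_closed by (simp add: densely_defined_closed_def)

lemma scaleC: "x \<in> D \<Longrightarrow> T (c *\<^sub>C x) = c *\<^sub>C T x"
  using densely_defined_closed by (simp add: densely_defined_closed_def)

lemma scaleR: "x \<in> D \<Longrightarrow> T (r *\<^sub>R x) = r *\<^sub>R T x"
  by (simp add: scaleR_scaleC scaleC)

lemma zero: "T 0 = 0"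
  using scaleR[OF subspace_0[OF domain_subspace], of 0] by simp

lemma diff: "x \<in> D \<Longrightarrow> y \<in> D \<Longrightarrow> T (x - y) = T x - T y"
  using add[of "x - y" y] subspace_diff[OF domain_subspace] by (simp add: eq_diff_eq)

lemma graph_closed: "closed (graph T D)"
  using densely_defined_closed by (simp add: densely_defined_closed_def)

lemma graph_subspace: "subspace (graph T D)"
  unfolding subspace_def graph_def
  using subspace_0[OF domain_subspace] subspace_add[OF domain_subspace]
    subspace_scale[OF domain_subspace] zero add scaleR
  by (auto simp: zero_prod_def)

lemma exists_unit_in_domain:
  assumes "\<exists>x::'a. x \<noteq> 0"
  shows "\<exists>x\<in>D. norm x = 1"
proof -
  have "\<exists>d\<in>D. d \<noteq> 0"
  proof (rule ccontr)
    assume "\<not> (\<exists>d\<in>D. d \<noteq> 0)"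
    then have "closure D \<subseteq> {0}"
      by (metis closure_minimal closed_singleton subsetI singletonI)
    with domain_dense assms show False
      by auto
  qed
  then obtain d where "d \<in> D" "d \<noteq> 0"
    by blast
  then show ?thesis
    by (intro bexI[of _ "(1 / norm d) *\<^sub>R d"]) (simp_all add: subspace_scale[OF domain_subspace])
qed

lemma min_modulus_nonneg: "\<exists>x::'a. x \<noteq> 0 \<Longrightarrow> 0 \<le> min_modulus T D"
  unfolding min_modulus_def using exists_unit_in_domain by (auto intro: cInf_greatest)

lemma exists_near_min_modulus:
  assumes "\<exists>x::'a. x \<noteq> 0" and "\<delta> > 0"
  obtains p where "p \<in> D" "norm p = 1" "norm (T p) < min_modulus T D + \<delta>"
  using cInf_lessD[of "{norm (T x) |x. x \<in> D \<and> norm x = 1}" "min_modulus T D + \<delta>"]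
    exists_unit_in_domain[OF assms(1)] assms(2)
  by (auto simp: min_modulus_def)

lemma min_modulus_mult_norm_le:
  assumes "x \<in> D"
  shows "min_modulus T D * norm x \<le> norm (T x)"
proof (cases "x = 0")
  case False
  have "min_modulus T D \<le> norm (T ((1 / norm x) *\<^sub>R x))"
    using False assms by (intro min_modulus_le) (simp_all add: subspace_scale[OF domain_subspace])
  then show ?thesis
    using False assms by (simp add: scaleR field_simps)
qed (simp add: zero)

lemma subspace_image_Int_domain:
  assumes "subspace C"
  shows "subspace (T ` (C \<inter> D))"
proof -
  have CD: "subspace (C \<inter> D)"
    using assms domain_subspace by (rule subspace_inter)
  show ?thesis
    unfolding subspace_def
  proof (intro conjI ballI allI)
    show "0 \<in> T ` (C \<inter> D)"
      using subspace_0[OF CD] zero by (metis image_eqI)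
  next
    fix a b
    assume "a \<in> T ` (C \<inter> D)" "b \<in> T ` (C \<inter> D)"
    then obtain x y where "x \<in> C \<inter> D" "y \<in> C \<inter> D" "a = T x" "b = T y"
      by blast
    then show "a + b \<in> T ` (C \<inter> D)"
      using subspace_add[OF CD] add by (metis IntD2 image_eqI)
  next
    fix c a
    assume "a \<in> T ` (C \<inter> D)"
    then obtain x where "x \<in> C \<inter> D" "a = T x"
      by blast
    then show "c *\<^sub>R a \<in> T ` (C \<inter> D)"
      using subspace_scale[OF CD] scaleR by (metis IntD2 image_eqI)
  qed
qed

lemma closed_image_Int_domain:
  assumes m: "min_modulus T D > 0" and "closed C"
  shows "closed (T ` (C \<inter> D))"
  unfolding closed_sequential_limits
proof (intro allI impI, elim conjE)
  fix s l
  assume "\<forall>n. s n \<in> T ` (C \<inter> D)" and "s \<longlonglongrightarrow> l"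
  then have "\<forall>n. \<exists>x. x \<in> C \<and> x \<in> D \<and> s n = T x"
    by blast
  then obtain y where yC: "\<And>n. y n \<in> C" and yD: "\<And>n. y n \<in> D" and s: "\<And>n. s n = T (y n)"
    by metis
  have "dist (y a) (y b) \<le> inverse (min_modulus T D) * dist (s a) (s b)" for a b
    using min_modulus_mult_norm_le[OF subspace_diff[OF domain_subspace yD yD], of a b] m
    by (simp add: s diff yD dist_norm field_simps)
  then have "Cauchy y"
    using m by (intro Cauchy_of_dist_le_mult[OF LIMSEQ_imp_Cauchy[OF \<open>s \<longlonglongrightarrow> l\<close>],
        where K = "inverse (min_modulus T D)"]) simp_all
  then obtain x where x: "y \<longlonglongrightarrow> x"
    using Cauchy_convergent_iff convergent_def by blast
  have "(s n, y n) \<in> graph T D" for n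
    using yD by (auto simp: graph_def s)
  moreover have "(\<lambda>n. (s n, y n)) \<longlonglongrightarrow> (l, x)"
    by (intro tendsto_Pair \<open>s \<longlonglongrightarrow> l\<close> x)
  ultimately have "(l, x) \<in> graph T D"
    by (rule closed_sequentially[OF graph_closed])
  moreover have "x \<in> C"
    using yC by (rule closed_sequentially[OF \<open>closed C\<close> _ x])
  ultimately show "l \<in> T ` (C \<inter> D)"
    by (auto simp: graph_def)
qed

lemma densely_defined_closed_add:
  assumes "bounded_clinear_op S"
  shows "densely_defined_closed (\<lambda>x. S x + T x) D"
proof -
  have "graph (\<lambda>x. S x + T x) D = (\<lambda>z. (fst z - S (snd z), snd z)) -` graph T D"
    by (auto simp: graph_def algebra_simps)
  moreover have "continuous_on UNIV (\<lambda>z. (fst z - S (snd z), snd z))"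
    using bounded_linear_compose[OF bounded_linear_if_bounded_clinear_op[OF assms] bounded_linear_snd]
    by (intro continuous_intros linear_continuous_on)
  ultimately have "closed (graph (\<lambda>x. S x + T x) D)"
    using graph_closed by (simp add: closed_vimage)
  with assms densely_defined_closed show ?thesis
    by (simp add: densely_defined_closed_def bounded_clinear_op_def scaleC_add_right)
qed

lemma gap_add_le_onorm:
  assumes "bounded_clinear_op S"
  shows "gap (\<lambda>x. S x + T x) D T D \<le> onorm S"
proof -
  have ST: "closed_operator (\<lambda>x. S x + T x) D"
    using densely_defined_closed_add[OF assms] by (rule closed_operator.intro)
  have S: "bounded_linear S"
    using assms by (rule bounded_linear_if_bounded_clinear_op)
  have S_le: "norm (S x) \<le> onorm S * norm (a, x)" for a x
    using onorm[OF S, of x] mult_left_mono[OF norm_snd_le[of x a] onorm_pos_le[OF S]] by simp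
  show ?thesis
    unfolding gap_def
  proof (rule onorm_orth_proj_diff_le[OF closed_operator.graph_subspace[OF ST]
        closed_operator.graph_closed[OF ST] graph_subspace graph_closed onorm_pos_le[OF S]])
    fix w
    assume "w \<in> graph (\<lambda>x. S x + T x) D"
    then show "\<exists>g\<in>graph T D. norm (w - g) \<le> onorm S * norm w"
      using S_le by (force simp: graph_def norm_Pair)
  next
    fix w
    assume "w \<in> graph T D"
    then show "\<exists>g\<in>graph (\<lambda>x. S x + T x) D. norm (w - g) \<le> onorm S * norm w"
      using S_le by (force simp: graph_def norm_Pair)
  qed
qed

end

section \<open>Rank-one perturbations attaining the minimum modulus\<close>

lemma exists_multiple_close:
  fixes r v :: "'c::real_inner"
  assumes "inner r v = (norm r)\<^sup>2" and "0 < m" and "m \<le> norm r"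
    and "(norm v)\<^sup>2 < m\<^sup>2 + \<epsilon>\<^sup>2" and "0 < \<epsilon>"
  obtains t where "norm (t *\<^sub>R r) \<le> m" and "t *\<^sub>R r \<noteq> v" and "norm (t *\<^sub>R r - v) \<le> \<epsilon>"
proof -
  define w where "w = (m / norm r) *\<^sub>R r"
  have r: "norm r > 0"
    using assms(2,3) by linarith
  have norm_w: "norm w = m"
    using r assms(2) by (simp add: w_def)
  have "inner w v = m * norm r"
    using r assms(1) by (simp add: w_def power2_eq_square)
  then have "(norm (w - v))\<^sup>2 = m\<^sup>2 - 2 * m * norm r + (norm v)\<^sup>2"
    unfolding norm_diff_square norm_w by simp
  also have "\<dots> < \<epsilon>\<^sup>2"
    using mult_left_mono[OF assms(3) less_imp_le[OF assms(2)]] assms(4)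
    by (simp add: power2_eq_square)
  finally have "norm (w - v) \<le> \<epsilon>"
    using assms(5) by (simp add: power2_less_imp_less less_imp_le)
  show ?thesis
  proof (cases "w = v")
    case False
    with norm_w \<open>norm (w - v) \<le> \<epsilon>\<close> show ?thesis
      by (intro that[of "m / norm r"]) (simp_all add: w_def)
  next
    case True
    \<comment> \<open>Shrink w slightly so that the perturbation w - v is nonzero.\<close>
    define d where "d = min 1 (\<epsilon> / m)"
    have d: "0 < d" "d \<le> 1" "d * m \<le> \<epsilon>"
      using assms(2,5) by (auto simp: d_def min_def field_simps)
    have tw: "((1 - d) * (m / norm r)) *\<^sub>R r = (1 - d) *\<^sub>R w"
      by (simp add: w_def)
    moreover have "(1 - d) *\<^sub>R w - v = - (d *\<^sub>R w)"
      using True by (simp add: algebra_simps)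
    moreover have "d *\<^sub>R w \<noteq> 0"
      using d norm_w assms(2) by auto
    ultimately show ?thesis
      using d norm_w by (intro that[of "(1 - d) * (m / norm r)"]) (auto simp: True[symmetric])
  qed
qed

context closed_operator
begin

lemma exists_orthogonal_residual:
  assumes m: "min_modulus T D > 0" and p: "p \<in> D"
  obtains r where "\<And>y. y \<in> D \<Longrightarrow> inner p y = 0 \<Longrightarrow> inner r (T y) = 0"
    and "inner r (T p) = (norm r)\<^sup>2" and "min_modulus T D * norm p \<le> norm r"
proof -
  define C where "C = {y. inner p y = 0}"
  define N where "N = T ` (C \<inter> D)"
  have N: "subspace N" "closed N"
    unfolding N_def C_def using m
    by (simp_all add: subspace_image_Int_domain subspace_hyperplane closed_image_Int_domain
        closed_hyperplane)
  define r where "r = T p - orth_proj N (T p)"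
  obtain y1 where y1: "inner p y1 = 0" "y1 \<in> D" "orth_proj N (T p) = T y1"
    using orth_proj_in[OF N, of "T p"] by (auto simp: N_def C_def)
  have r_orth: "inner r z = 0" if "z \<in> N" for z
    unfolding r_def using N that by (rule orth_proj_orthogonal)
  show ?thesis
  proof
    fix y
    assume "y \<in> D" "inner p y = 0"
    then show "inner r (T y) = 0"
      by (intro r_orth) (simp add: N_def C_def)
  next
    have "T p = r + T y1"
      by (simp add: r_def y1(3))
    then show "inner r (T p) = (norm r)\<^sup>2"
      using r_orth[of "T y1"] y1 by (simp add: inner_add_right power2_norm_eq_inner N_def C_def)
  next
    have "(norm (p - y1))\<^sup>2 = (norm p)\<^sup>2 + (norm y1)\<^sup>2"
      by (simp add: norm_diff_square y1(1))
    then have "norm p \<le> norm (p - y1)"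
      by (simp add: power2_le_imp_le)
    then have "min_modulus T D * norm p \<le> min_modulus T D * norm (p - y1)"
      using m by simp
    also have "\<dots> \<le> norm r"
      using min_modulus_mult_norm_le[of "p - y1"] subspace_diff[OF domain_subspace p y1(2)]
      by (simp add: r_def y1(3) diff p y1(2))
    finally show "min_modulus T D * norm p \<le> norm r" .
  qed
qed

lemma min_attaining_add_butterfly:
  assumes p: "p \<in> D" "norm p = 1" and w: "norm w \<le> min_modulus T D"
    and orth: "\<And>y. y \<in> D \<Longrightarrow> cinner p y = 0 \<Longrightarrow> inner w (T y) = 0"
  shows "min_attaining (\<lambda>x. butterfly (w - T p) p x + T x) D"
proof (rule min_attainingI[OF p])
  fix x
  assume x: "x \<in> D" "norm x = 1"
  define \<alpha> where "\<alpha> = cinner p x"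
  define y where "y = x - \<alpha> *\<^sub>C p"
  have yD: "y \<in> D"
    unfolding y_def using domain_subspace x(1) domain_scaleC[OF p(1)] by (rule subspace_diff)
  have y_orth: "cinner p y = 0"
    by (simp add: y_def \<alpha>_def cinner_diff_right cinner_scaleC_right cinner_unit_self p(2))
  have Bx: "butterfly (w - T p) p x + T x = \<alpha> *\<^sub>C w + T y"
    using add[OF domain_scaleC[OF p(1)] yD, of \<alpha>]
    by (simp add: y_def butterfly_def \<alpha>_def scaleC p(1) scaleC_diff_right)
  have cross: "inner (\<alpha> *\<^sub>C w) (T y) = 0"
  proof -
    have "inner (\<alpha> *\<^sub>C w) (T y) = inner w (T (cnj \<alpha> *\<^sub>C y))"
      by (simp add: inner_scaleC_left scaleC yD)
    also have "\<dots> = 0"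
      using orth[OF domain_scaleC[OF yD]] by (simp add: cinner_scaleC_right y_orth)
    finally show ?thesis .
  qed
  have "inner (\<alpha> *\<^sub>C p) y = 0"
    by (simp add: inner_scaleC_eq_cinner y_orth)
  then have pythagoras: "(cmod \<alpha>)\<^sup>2 + (norm y)\<^sup>2 = 1"
    using norm_add_square[of "\<alpha> *\<^sub>C p" y] x(2) by (simp add: y_def norm_scaleC p(2))
  have "(norm w)\<^sup>2 = (norm w)\<^sup>2 * ((cmod \<alpha>)\<^sup>2 + (norm y)\<^sup>2)"
    by (simp add: pythagoras)
  also have "\<dots> = (cmod \<alpha> * norm w)\<^sup>2 + (norm w * norm y)\<^sup>2"
    by (simp add: algebra_simps)
  also have "\<dots> \<le> (cmod \<alpha> * norm w)\<^sup>2 + (norm (T y))\<^sup>2"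
    using mult_right_mono[OF w norm_ge_zero[of y]] min_modulus_mult_norm_le[OF yD]
    by (simp add: power_mono)
  also have "\<dots> = (norm (butterfly (w - T p) p x + T x))\<^sup>2"
    unfolding Bx norm_add_square cross by (simp add: norm_scaleC power_mult_distrib)
  finally have "norm w \<le> norm (butterfly (w - T p) p x + T x)"
    by (rule power2_le_imp_le) simp
  then show "norm (butterfly (w - T p) p p + T p) \<le> norm (butterfly (w - T p) p x + T x)"
    by (simp add: butterfly_apply_self p(2))
qed

lemma butterfly_perturbation:
  assumes "p \<in> D" and "norm p = 1" and "norm w \<le> min_modulus T D"
    and "\<And>y. y \<in> D \<Longrightarrow> cinner p y = 0 \<Longrightarrow> inner w (T y) = 0"
    and "norm (w - T p) \<le> \<epsilon>"
  defines "S \<equiv> butterfly (w - T p) p"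
  shows "bounded_clinear_op S \<and> onorm S \<le> \<epsilon> \<and> min_attaining (\<lambda>x. S x + T x) D
    \<and> gap (\<lambda>x. S x + T x) D T D \<le> \<epsilon>"
proof -
  have "bounded_clinear_op S" and "onorm S \<le> \<epsilon>"
    using assms(2,5) bounded_clinear_op_butterfly onorm_butterfly_le[of p "w - T p"]
    by (simp_all add: S_def)
  moreover have "gap (\<lambda>x. S x + T x) D T D \<le> \<epsilon>"
    using gap_add_le_onorm[OF \<open>bounded_clinear_op S\<close>] \<open>onorm S \<le> \<epsilon>\<close> by linarith
  moreover have "min_attaining (\<lambda>x. S x + T x) D"
    unfolding S_def by (rule min_attaining_add_butterfly[OF assms(1-4)])
  ultimately show ?thesis
    by blast
qed

lemma exists_rank_one_perturbation:
  assumes "\<exists>x::'a. x \<noteq> 0" and m: "min_modulus T D > 0" and "\<epsilon> > 0"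
  shows "\<exists>S. bounded_clinear_op S \<and> rank_one S \<and> onorm S \<le> \<epsilon> \<and>
    min_attaining (\<lambda>x. S x + T x) D \<and> gap (\<lambda>x. S x + T x) D T D \<le> \<epsilon>"
proof -
  let ?m = "min_modulus T D"
  have "sqrt (?m\<^sup>2 + \<epsilon>\<^sup>2) > sqrt (?m\<^sup>2)"
    using \<open>\<epsilon> > 0\<close> by (intro real_sqrt_less_mono) simp
  then obtain p where p: "p \<in> D" "norm p = 1" "norm (T p) < sqrt (?m\<^sup>2 + \<epsilon>\<^sup>2)"
    using exists_near_min_modulus[OF assms(1), of "sqrt (?m\<^sup>2 + \<epsilon>\<^sup>2) - ?m"] m by auto
  then have Tp: "(norm (T p))\<^sup>2 < ?m\<^sup>2 + \<epsilon>\<^sup>2"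
    using power_strict_mono[OF p(3) norm_ge_zero, of 2] by simp
  obtain r where r_orth: "\<And>y. y \<in> D \<Longrightarrow> inner p y = 0 \<Longrightarrow> inner r (T y) = 0"
    and "inner r (T p) = (norm r)\<^sup>2" and "?m \<le> norm r"
    using exists_orthogonal_residual[OF m p(1)] p(2) by auto
  then obtain t where t: "norm (t *\<^sub>R r) \<le> ?m" "t *\<^sub>R r \<noteq> T p" "norm (t *\<^sub>R r - T p) \<le> \<epsilon>"
    using exists_multiple_close[OF _ m _ Tp \<open>\<epsilon> > 0\<close>] by blast
  have "inner (t *\<^sub>R r) (T y) = 0" if "y \<in> D" "cinner p y = 0" for y
    using r_orth[OF that(1)] arg_cong[OF that(2), of Re] by simp
  then have "bounded_clinear_op (butterfly (t *\<^sub>R r - T p) p) \<and>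
      onorm (butterfly (t *\<^sub>R r - T p) p) \<le> \<epsilon> \<and>
      min_attaining (\<lambda>x. butterfly (t *\<^sub>R r - T p) p x + T x) D \<and>
      gap (\<lambda>x. butterfly (t *\<^sub>R r - T p) p x + T x) D T D \<le> \<epsilon>"
    by (rule butterfly_perturbation[OF p(1,2) t(1) _ t(3)])
  moreover have "rank_one (butterfly (t *\<^sub>R r - T p) p)"
    using t(2) by (intro rank_one_butterfly[OF p(2)]) simp
  ultimately show ?thesis
    by blast
qed

end

theorem theorem3p5:
  fixes T :: "'a::complex_hilbert \<Rightarrow> 'b::complex_hilbert" and D :: "'a set" and \<epsilon> :: real
  assumes "infinite_dimensional TYPE('a)" and "infinite_dimensional TYPE('b)"
    and "densely_defined_closed T D"
    and "\<epsilon> > 0"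
  shows "(\<exists>S. bounded_clinear_op S \<and> onorm S \<le> \<epsilon> \<and>
              min_attaining (\<lambda>x. S x + T x) D \<and> gap (\<lambda>x. S x + T x) D T D \<le> \<epsilon>)
       \<and> (min_modulus T D > 0 \<longrightarrow>
            (\<exists>S. bounded_clinear_op S \<and> rank_one S \<and> onorm S \<le> \<epsilon> \<and>
              min_attaining (\<lambda>x. S x + T x) D \<and> gap (\<lambda>x. S x + T x) D T D \<le> \<epsilon>))"
proof -
  interpret closed_operator T D
    by (rule closed_operator.intro) (fact assms(3))
  have nontrivial: "\<exists>x::'a. x \<noteq> 0"
    using assms(1) by (rule nonzero_if_infinite_dimensional)
  show ?thesis
  proof (cases "min_modulus T D > 0")
    case True
    then obtain S where S: "bounded_clinear_op S" "rank_one S" "onorm S \<le> \<epsilon>"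
      "min_attaining (\<lambda>x. S x + T x) D" "gap (\<lambda>x. S x + T x) D T D \<le> \<epsilon>"
      using exists_rank_one_perturbation[OF nontrivial _ assms(4)] by blast
    show ?thesis
      by (intro conjI impI exI[of _ S] S)
  next
    case False
    with min_modulus_nonneg[OF nontrivial] have m0: "min_modulus T D = 0"
      by simp
    obtain p where p: "p \<in> D" "norm p = 1" "norm (T p) < min_modulus T D + \<epsilon>"
      using exists_near_min_modulus[OF nontrivial assms(4)] .
    have "norm (0::'b) \<le> min_modulus T D" "\<And>y. inner 0 (T y) = 0" "norm (0 - T p) \<le> \<epsilon>"
      using p(3) by (simp_all add: m0)
    from butterfly_perturbation[OF p(1,2) this]
    have "\<exists>S. bounded_clinear_op S \<and> onorm S \<le> \<epsilon> \<and>
        min_attaining (\<lambda>x. S x + T x) D \<and> gap (\<lambda>x. S x + T x) D T D \<le> \<epsilon>"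
      by (rule exI[of _ "butterfly (0 - T p) p"])
    with False show ?thesis
      by simp
  qed
qed

end
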